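(* Let $A$ be a connectivity class of external positions which is not the frame class, and let $\pi$ be an even permutation of $A$. Then there exists a combination $g$ such that $g(p)=\pi(p)$ for all $p\in A$ and $g(q,l)=(q,l)$ for every external position $q\notin A$ and every $l\in B(q)$.
   Context: Fix integers $k\ge 2$, $n\ge 3$, $M=\{0,\dots,k-1\}$. Positions are $p\in M^n$; $B(p)=\{i:p_i\in\{0,k-1\}\}$, $p$ external if $B(p)\ne\emptyset$ (internal positions are disregarded). For distinct $i,j$, $\psi_{i,j}:M^n\to M^n$ is $(\psi_{i,j}p)_i=k-1-p_j$, $(\psi_{i,j}p)_j=p_i$, other coordinates unchanged; $B(\psi_{i,j}p)=\tau_{ij}(B(p))$ where $\tau_{ij}$ is the transposition of $i,j$. A move is given by distinct $i,j$ and constants $c_l\in M$ ($l\notin\{i,j\}$): it applies $\psi_{i,j}$ to all positions $p$ with $p_l=c_l$ ($l\notin\{i,j\}$) and fixes the others. It also acts on $X=\{(p,l): p\text{ external}, l\in B(p)\}$ (pairs recording the orientation face $l$ of the cubie at $p$) by $(p,l)\mapsto(\psi_{i,j}(p),\tau_{ij}(l))$ for $p$ in its layer, and fixes the other pairs. A combination is a finite sequence of moves, acting on positions and on $X$ by composition. Connectivity classes are the orbits of external positions under combinations. For odd $k$, the frame class is the set of positions with exactly one coordinate in $\{0,k-1\}$ and all other coordinates equal to $(k-1)/2$; for even $k$ there is no frame class. *)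

theory Defs
  imports "HOL-Combinatorics.Permutations"
begin

text \<open>Positions p in M^n are lists of length n with entries in M = {0..<k}.
  Coordinates are indexed by {0..<n}.\<close>

definition positions :: "nat \<Rightarrow> nat \<Rightarrow> nat list set" where
  "positions k n = {p. length p = n \<and> (\<forall>i<n. p ! i < k)}"

definition Bset :: "nat \<Rightarrow> nat list \<Rightarrow> nat set" where
  "Bset k p = {i. i < length p \<and> (p ! i = 0 \<or> p ! i = k - 1)}"

definition external :: "nat \<Rightarrow> nat \<Rightarrow> nat list \<Rightarrow> bool" where
  "external k n p \<longleftrightarrow> p \<in> positions k n \<and> Bset k p \<noteq> {}"

definition psi :: "nat \<Rightarrow> nat \<Rightarrow> nat \<Rightarrow> nat list \<Rightarrow> nat list" where
  "psi k i j p = p[i := k - 1 - p ! j, j := p ! i]"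

definition tau :: "nat \<Rightarrow> nat \<Rightarrow> nat \<Rightarrow> nat" where
  "tau i j l = (if l = i then j else if l = j then i else l)"

text \<open>A move is a triple (i, j, c) with distinct i, j < n and constants c l in M
  for l not in {i,j} (values of c at i, j are irrelevant).\<close>
type_synonym move = "nat \<times> nat \<times> (nat \<Rightarrow> nat)"

definition valid_move :: "nat \<Rightarrow> nat \<Rightarrow> move \<Rightarrow> bool" where
  "valid_move k n m = (case m of (i, j, c) \<Rightarrow>
     i < n \<and> j < n \<and> i \<noteq> j \<and> (\<forall>l<n. l \<noteq> i \<and> l \<noteq> j \<longrightarrow> c l < k))"

definition in_layer :: "nat \<Rightarrow> move \<Rightarrow> nat list \<Rightarrow> bool" where
  "in_layer n m p = (case m of (i, j, c) \<Rightarrow>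
     (\<forall>l<n. l \<noteq> i \<and> l \<noteq> j \<longrightarrow> p ! l = c l))"

definition move_pos :: "nat \<Rightarrow> nat \<Rightarrow> move \<Rightarrow> nat list \<Rightarrow> nat list" where
  "move_pos k n m p = (case m of (i, j, c) \<Rightarrow>
     (if in_layer n m p then psi k i j p else p))"

definition move_X :: "nat \<Rightarrow> nat \<Rightarrow> move \<Rightarrow> nat list \<times> nat \<Rightarrow> nat list \<times> nat" where
  "move_X k n m x = (case m of (i, j, c) \<Rightarrow> (case x of (p, l) \<Rightarrow>
     (if in_layer n m p then (psi k i j p, tau i j l) else (p, l))))"

text \<open>A combination is a finite list of moves [m1, ..., mr]; it acts by
  first applying m1, then m2, etc.\<close>
definition valid_comb :: "nat \<Rightarrow> nat \<Rightarrow> move list \<Rightarrow> bool" where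
  "valid_comb k n g \<longleftrightarrow> (\<forall>m\<in>set g. valid_move k n m)"

definition comb_pos :: "nat \<Rightarrow> nat \<Rightarrow> move list \<Rightarrow> nat list \<Rightarrow> nat list" where
  "comb_pos k n g p = fold (move_pos k n) g p"

definition comb_X :: "nat \<Rightarrow> nat \<Rightarrow> move list \<Rightarrow> nat list \<times> nat \<Rightarrow> nat list \<times> nat" where
  "comb_X k n g x = fold (move_X k n) g x"

definition conn_class :: "nat \<Rightarrow> nat \<Rightarrow> nat list set \<Rightarrow> bool" where
  "conn_class k n A \<longleftrightarrow> (\<exists>p. external k n p \<and>
     A = {comb_pos k n g p | g. valid_comb k n g})"

definition frame_class :: "nat \<Rightarrow> nat \<Rightarrow> nat list set" where
  "frame_class k n = (if odd k then
     {p \<in> positions k n. card (Bset k p) = 1 \<and>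
        (\<forall>i<n. i \<notin> Bset k p \<longrightarrow> p ! i = (k - 1) div 2)}
   else {})"

end

theory Submission
  imports Defs "HOL-Combinatorics.Cycles"
begin

text \<open>Call a permutation of \<open>A\<close> realizable if some combination acts as it on \<open>A\<close>
  and fixes every oriented cubie outside \<open>A\<close>. Realizable permutations are closed under
  composition and the 3-cycles generate the even permutations, so it suffices to realize every
  3-cycle of \<open>A\<close>.

  Let a move \<open>\<gamma>\<close> send \<open>r \<in> A\<close> to \<open>\<gamma> r \<noteq> r\<close>. Since \<open>n \<ge> 3\<close> and \<open>A\<close> is not
  the frame class, there is a third coordinate \<open>a\<close> such that for each coordinate \<open>b\<close> of
  \<open>\<gamma>\<close> a move through \<open>a\<close> and \<open>b\<close> in the layer of \<open>r\<close> changes the \<open>a\<close>-coordinate of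
  every position that differs from \<open>r\<close> only at \<open>a\<close>. Points moved by both of these moves
  differ from \<open>r\<close> only at \<open>a\<close>, so their commutator \<open>P\<close> moves no point of the layer of
  \<open>\<gamma>\<close> except \<open>r\<close>, and the commutator of \<open>P\<close> and \<open>\<gamma>\<close> moves only \<open>r\<close>, \<open>P r\<close> and
  \<open>\<gamma> r\<close>, which it permutes cyclically.

  Call \<open>x, y \<in> A\<close> linked if some realizable 3-cycle maps \<open>x\<close> to \<open>y\<close>. Conjugating
  3-cycles by 3-cycles shows that linkage is transitive; as every move links \<open>r\<close> to its image
  and \<open>A\<close> is an orbit, any two points of \<open>A\<close> are linked, and then every 3-cycle on \<open>A\<close>
  is realizable.\<close>

section \<open>3-cycles and even permutations\<close>

lemma cycle_of_list_3_apply: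
  assumes "distinct [a, b, c]"
  shows "cycle_of_list [a, b, c] x = (if x = a then b else if x = b then c else if x = c then a else x)"
  using assms by (auto simp: transpose_def)

lemma evenperm_cycle_of_list_3:
  assumes "distinct [a, b, c]"
  shows "evenperm (cycle_of_list [a, b, c])"
  using assms by (simp add: evenperm_comp permutation_swap_id evenperm_swap)

lemma cycle_of_list_3_rotate:
  assumes "distinct [a, b, c]"
  shows "cycle_of_list [b, c, a] = cycle_of_list [a, b, c]"
  using assms by (auto simp: fun_eq_iff transpose_def)

lemma cycle_of_list_3_square:
  assumes "distinct [a, b, c]"
  shows "cycle_of_list [a, b, c] \<circ> cycle_of_list [a, b, c] = cycle_of_list [a, c, b]"
  using assms by (auto simp: fun_eq_iff transpose_def)

lemma cycle_of_list_3_inverse: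
  assumes "distinct [a, b, c]"
  shows "cycle_of_list [a, c, b] (cycle_of_list [a, b, c] x) = x"
  using assms by (auto simp: transpose_def)

lemma cycle_of_list_3_conj:
  assumes "distinct [a, b, c]" "distinct [u, v, w]"
  shows "cycle_of_list [u, v, w] \<circ> cycle_of_list [a, b, c] \<circ> cycle_of_list [u, w, v] =
    cycle_of_list (map (cycle_of_list [u, v, w]) [a, b, c])"
proof -
  have "inv (cycle_of_list [u, v, w]) = cycle_of_list [u, w, v]"
    using assms(2) by (intro inv_unique_comp) (auto simp: fun_eq_iff transpose_def)
  moreover have "bij (cycle_of_list [u, v, w])"
    by (rule permutation_bijective[OF permutation_of_cycle])
  ultimately show ?thesis
    using conjugation_of_cycle[OF assms(1)] by metis
qed

declare cycle_of_list.simps(1) [simp del]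

lemma evenperm_support_reduction:
  assumes "finite A" "\<rho> permutes A" "evenperm \<rho>" "\<rho> \<noteq> id"
  obtains a b c where "distinct [a, b, c]" "a \<in> A" "b \<in> A" "c \<in> A"
    "card {x. (cycle_of_list [a, b, c] \<circ> \<rho>) x \<noteq> x} < card {x. \<rho> x \<noteq> x}"
proof -
  have supp_A: "{x. \<rho> x \<noteq> x} \<subseteq> A"
    using assms(2) permutes_not_in by fastforce
  have inj: "inj \<rho>"
    using assms(2) permutes_inj by blast
  obtain a where a: "\<rho> a \<noteq> a"
    using assms(4) by (auto simp: fun_eq_iff)
  define b where "b = \<rho> a"
  have b: "\<rho> b \<noteq> b"
    using a inj b_def by (metis injD)
  \<comment> \<open>an even permutation is not the transposition of a and b\<close>
  obtain y where y: "\<rho> y \<noteq> y" "y \<noteq> a" "y \<noteq> b"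
  proof (rule ccontr)
    assume "\<not> thesis"
    then have fix_others: "\<And>y. y \<noteq> a \<Longrightarrow> y \<noteq> b \<Longrightarrow> \<rho> y = y"
      using that by blast
    have "\<rho> (\<rho> b) \<noteq> \<rho> b"
      using b inj by (metis injD)
    then have "\<rho> b = a"
      using fix_others[of "\<rho> b"] b by blast
    then have "\<rho> = transpose a b"
      using fix_others b_def by (auto simp: fun_eq_iff transpose_def)
    then show False
      using assms(3) a b_def evenperm_swap by metis
  qed
  have d: "distinct [b, a, y]"
    using a b_def y by auto
  let ?\<rho>' = "cycle_of_list [b, a, y] \<circ> \<rho>"
  have "{x. ?\<rho>' x \<noteq> x} \<subseteq> {x. \<rho> x \<noteq> x} - {a}"
    using d a b y by (auto simp: cycle_of_list_3_apply b_def)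
  then have "card {x. ?\<rho>' x \<noteq> x} \<le> card ({x. \<rho> x \<noteq> x} - {a})"
    using supp_A assms(1) by (intro card_mono) (auto intro: finite_subset)
  also have "\<dots> < card {x. \<rho> x \<noteq> x}"
    using supp_A assms(1) a by (intro card_Diff1_less) (auto intro: finite_subset)
  finally show thesis
    using that d supp_A a b y by blast
qed

lemma evenperm_3_cycle_induct [consumes 3, case_names id cycle comp]:
  assumes "finite A" "\<rho> permutes A" "evenperm \<rho>"
    and id: "P id"
    and cycle: "\<And>a b c. distinct [a, b, c] \<Longrightarrow> a \<in> A \<Longrightarrow> b \<in> A \<Longrightarrow> c \<in> A \<Longrightarrow>
      P (cycle_of_list [a, b, c])"
    and comp: "\<And>f g. f permutes A \<Longrightarrow> P f \<Longrightarrow> P g \<Longrightarrow> P (g \<circ> f)"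
  shows "P \<rho>"
  using assms(2,3)
proof (induction "card {x. \<rho> x \<noteq> x}" arbitrary: \<rho> rule: less_induct)
  case less
  show ?case
  proof (cases "\<rho> = id")
    case True
    then show ?thesis using id by simp
  next
    case False
    then obtain a b c where abc: "distinct [a, b, c]" "a \<in> A" "b \<in> A" "c \<in> A"
      and smaller: "card {x. (cycle_of_list [a, b, c] \<circ> \<rho>) x \<noteq> x} < card {x. \<rho> x \<noteq> x}"
      using evenperm_support_reduction[OF assms(1) less.prems] by blast
    let ?\<rho>' = "cycle_of_list [a, b, c] \<circ> \<rho>"
    have permutes': "?\<rho>' permutes A"
      using abc less.prems(1) cycle_permutes[of "[a, b, c]"]
      by (intro permutes_compose) (auto intro: permutes_subset)
    have "permutation \<rho>"
      using less.prems(1) assms(1) permutation_permutes by blast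
    then have "evenperm ?\<rho>'"
      using less.prems(2) evenperm_cycle_of_list_3[OF abc(1)]
      by (simp only: evenperm_comp[OF permutation_of_cycle])
    then have "P ?\<rho>'"
      using less.hyps smaller permutes' by blast
    moreover have "cycle_of_list [a, c, b] \<circ> ?\<rho>' = \<rho>"
      using cycle_of_list_3_inverse[OF abc(1)] by (simp add: fun_eq_iff)
    moreover have "distinct [a, c, b]"
      using abc(1) by auto
    ultimately show ?thesis
      using comp[OF permutes' _ cycle] abc by metis
  qed
qed

lemma cycle_of_list_3_permutes:
  assumes "a \<in> A" "b \<in> A" "c \<in> A"
  shows "cycle_of_list [a, b, c] permutes A"
  using cycle_permutes[of "[a, b, c]"] assms by (auto intro: permutes_subset)

locale cycle_closed =
  fixes A :: "'a set" and R :: "('a \<Rightarrow> 'a) \<Rightarrow> bool"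
  assumes R_id: "R id"
    and R_comp: "\<And>f g. R f \<Longrightarrow> R g \<Longrightarrow> f ` A \<subseteq> A \<Longrightarrow> R (g \<circ> f)"
begin

lemma R_cycle_reverse:
  assumes "R (cycle_of_list [a, b, c])" "distinct [a, b, c]" "a \<in> A" "b \<in> A" "c \<in> A"
  shows "R (cycle_of_list [a, c, b])"
proof -
  have "cycle_of_list [a, b, c] ` A = A"
    using cycle_of_list_3_permutes[OF assms(3-5)] by (rule permutes_image)
  then show ?thesis
    using R_comp[OF assms(1) assms(1)] cycle_of_list_3_square[OF assms(2)] by simp
qed

lemma R_cycle_conj:
  assumes "R (cycle_of_list [a, b, c])" "distinct [a, b, c]" "a \<in> A" "b \<in> A" "c \<in> A"
    and "R (cycle_of_list [u, v, w])" "distinct [u, v, w]" "u \<in> A" "v \<in> A" "w \<in> A"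
  shows "R (cycle_of_list (map (cycle_of_list [u, v, w]) [a, b, c]))"
proof -
  have perm: "cycle_of_list [a, b, c] permutes A" "cycle_of_list [u, w, v] permutes A"
    using assms by (auto intro: cycle_of_list_3_permutes)
  have img: "cycle_of_list [u, w, v] ` A = A"
    "(cycle_of_list [a, b, c] \<circ> cycle_of_list [u, w, v]) ` A = A"
    by (rule permutes_image[OF perm(2)], rule permutes_image[OF permutes_compose[OF perm(2,1)]])
  have "R (cycle_of_list [u, w, v])"
    using R_cycle_reverse assms(6-10) by blast
  then have "R (cycle_of_list [a, b, c] \<circ> cycle_of_list [u, w, v])"
    using R_comp[OF _ assms(1)] img(1) by simp
  then have "R (cycle_of_list [u, v, w] \<circ> (cycle_of_list [a, b, c] \<circ> cycle_of_list [u, w, v]))"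
    using R_comp[OF _ assms(6)] img(2) by simp
  then show ?thesis
    using cycle_of_list_3_conj[OF assms(2,7)] by (simp add: comp_assoc)
qed

definition linked :: "'a \<Rightarrow> 'a \<Rightarrow> bool" where
  "linked x y \<longleftrightarrow> x \<in> A \<and> y \<in> A \<and>
    (x = y \<or> (\<exists>z\<in>A. distinct [x, y, z] \<and> R (cycle_of_list [x, y, z])))"

lemma linked_refl: "x \<in> A \<Longrightarrow> linked x x"
  by (simp add: linked_def)

lemma linked_trans:
  assumes "linked x y" "linked y w"
  shows "linked x w"
proof -
  have A: "x \<in> A" "y \<in> A" "w \<in> A"
    using assms by (auto simp: linked_def)
  show ?thesis
  proof (cases "x = y \<or> y = w \<or> x = w")
    case True
    then show ?thesis
      using assms A by (auto simp: linked_def)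
  next
    case False
    obtain z where z: "z \<in> A" "distinct [x, y, z]" "R (cycle_of_list [x, y, z])"
      using assms(1) False by (auto simp: linked_def)
    obtain v where v: "v \<in> A" "distinct [y, w, v]" "R (cycle_of_list [y, w, v])"
      using assms(2) False by (auto simp: linked_def)
    show ?thesis
    proof (cases "x = v")
      case True
      then have "R (cycle_of_list [x, y, w])"
        using v cycle_of_list_3_rotate[of x y w] by auto
      then have "R (cycle_of_list [x, w, y])"
        using R_cycle_reverse[of x y w] A False by auto
      then show ?thesis
        using A False by (auto simp: linked_def)
    next
      case False': False
      let ?z' = "cycle_of_list [y, w, v] z"
      have "R (cycle_of_list (map (cycle_of_list [y, w, v]) [x, y, z]))"
        using R_cycle_conj[OF z(3,2) A(1,2) z(1) v(3,2) A(2,3) v(1)] .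
      moreover have "map (cycle_of_list [y, w, v]) [x, y, z] = [x, w, ?z']"
        using v(2) False False' by (simp add: cycle_of_list_3_apply)
      moreover have "?z' \<in> A" "distinct [x, w, ?z']"
        using z v False False' A by (auto simp: cycle_of_list_3_apply)
      ultimately show ?thesis
        using A by (auto simp: linked_def)
    qed
  qed
qed

lemma R_cycle_if_all_linked:
  assumes all: "\<And>x y. x \<in> A \<Longrightarrow> y \<in> A \<Longrightarrow> linked x y"
    and abc: "distinct [a, b, c]" "a \<in> A" "b \<in> A" "c \<in> A"
  shows "R (cycle_of_list [a, b, c])"
proof -
  obtain z where z: "z \<in> A" "distinct [a, b, z]" "R (cycle_of_list [a, b, z])"
    using all[of a b] abc by (auto simp: linked_def)
  show ?thesis
  proof (cases "z = c")
    case True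
    then show ?thesis using z by simp
  next
    case False
    obtain w where w: "w \<in> A" "distinct [z, c, w]" "R (cycle_of_list [z, c, w])"
      using all[of z c] False z abc by (auto simp: linked_def)
    have d: "distinct [a, b, c, z]"
      using abc z False by auto
    consider "w \<noteq> a \<and> w \<noteq> b" | "w = a" | "w = b" by blast
    then show ?thesis
    proof cases
      case 1
      have "R (cycle_of_list (map (cycle_of_list [z, c, w]) [a, b, z]))"
        using R_cycle_conj[OF z(3,2) abc(2,3) z(1) w(3,2) z(1) abc(4) w(1)] .
      moreover have "map (cycle_of_list [z, c, w]) [a, b, z] = [a, b, c]"
        using 1 d w(2) by (auto simp: cycle_of_list_3_apply)
      ultimately show ?thesis by simp
    next
      case 2
      have "R (cycle_of_list (map (cycle_of_list [a, b, z]) [z, c, a]))"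
        using R_cycle_conj[OF w(3,2) z(1) abc(4) w(1) z(3,2) abc(2,3) z(1)] 2 by simp
      moreover have "map (cycle_of_list [a, b, z]) [z, c, a] = [a, c, b]"
        using d by (auto simp: cycle_of_list_3_apply)
      ultimately have "R (cycle_of_list [a, c, b])" by simp
      then show ?thesis
        using R_cycle_reverse[of a c b] d abc by auto
    next
      case 3
      have azb: "R (cycle_of_list [a, z, b])"
        using R_cycle_reverse[OF z(3,2) abc(2,3) z(1)] .
      have "R (cycle_of_list (map (cycle_of_list [a, z, b]) [z, c, b]))"
        using R_cycle_conj[OF w(3,2) z(1) abc(4) w(1) azb] 3 d abc z by auto
      moreover have "map (cycle_of_list [a, z, b]) [z, c, b] = [b, c, a]"
        using d by (auto simp: cycle_of_list_3_apply)
      ultimately show ?thesis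
        using cycle_of_list_3_rotate[OF abc(1)] by simp
    qed
  qed
qed

theorem R_evenperm:
  assumes "finite A" "\<And>x y. x \<in> A \<Longrightarrow> y \<in> A \<Longrightarrow> linked x y"
    and "\<rho> permutes A" "evenperm \<rho>"
  shows "R \<rho>"
  using assms(1,3,4)
proof (induction rule: evenperm_3_cycle_induct)
  case id
  show ?case by (rule R_id)
next
  case (cycle a b c)
  then show ?case using R_cycle_if_all_linked assms(2) by blast
next
  case (comp f g)
  then show ?case using R_comp permutes_image by (metis order_refl)
qed

end

section \<open>Moves and combinations\<close>

lemma length_psi [simp]: "length (psi k i j p) = length p"
  by (simp add: psi_def)

lemma nth_psi:
  assumes "i < length p" "j < length p" "i \<noteq> j"
  shows "psi k i j p ! t = (if t = i then k - 1 - p ! j else if t = j then p ! i else p ! t)"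
  using assms by (auto simp: psi_def nth_list_update)

lemma psi_positions:
  assumes "p \<in> positions k n" "i < n" "j < n" "i \<noteq> j"
  shows "psi k i j p \<in> positions k n"
  using assms unfolding positions_def by (auto simp: nth_psi)

lemma psi_order_4:
  assumes "p \<in> positions k n" "i < n" "j < n" "i \<noteq> j"
  shows "psi k i j (psi k i j (psi k i j (psi k i j p))) = p"
  using assms by (intro nth_equalityI) (auto simp: positions_def nth_psi)

lemma in_layer_psi:
  assumes "length p = n" "i < n" "j < n" "i \<noteq> j"
  shows "in_layer n (i, j, c) (psi k i j p) = in_layer n (i, j, c) p"
  using assms by (simp add: in_layer_def nth_psi)

lemma move_pos_in_layer: "in_layer n (i, j, c) p \<Longrightarrow> move_pos k n (i, j, c) p = psi k i j p"
  by (simp add: move_pos_def)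

lemma move_pos_not_in_layer: "\<not> in_layer n m p \<Longrightarrow> move_pos k n m p = p"
  by (cases m) (simp add: move_pos_def)

lemma move_X_not_in_layer: "\<not> in_layer n m (fst x) \<Longrightarrow> move_X k n m x = x"
  by (cases m; cases x) (simp add: move_X_def)

lemma fst_move_X: "fst (move_X k n m (p, l)) = move_pos k n m p"
  by (cases m) (simp add: move_X_def move_pos_def)

lemma move_pos_positions:
  assumes "valid_move k n m" "p \<in> positions k n"
  shows "move_pos k n m p \<in> positions k n"
  using assms by (cases m) (auto simp: move_pos_def valid_move_def intro: psi_positions)

lemma move_X_order_4:
  assumes "valid_move k n m" "fst x \<in> positions k n"
  shows "move_X k n m (move_X k n m (move_X k n m (move_X k n m x))) = x"
proof -
  obtain i j c where m: "m = (i, j, c)" by (cases m)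
  obtain p l where x: "x = (p, l)" by (cases x)
  have ij: "i < n" "j < n" "i \<noteq> j"
    using assms m by (auto simp: valid_move_def)
  have p: "p \<in> positions k n"
    using assms x by simp
  let ?\<psi> = "psi k i j"
  have pos: "?\<psi> p \<in> positions k n" "?\<psi> (?\<psi> p) \<in> positions k n" "?\<psi> (?\<psi> (?\<psi> p)) \<in> positions k n"
    using p ij by (auto intro!: psi_positions)
  have layer: "in_layer n m (?\<psi> q) = in_layer n m q" if "q \<in> positions k n" for q
    using that m ij in_layer_psi by (simp add: positions_def)
  show ?thesis
    using m x layer[OF p] layer[OF pos(1)] layer[OF pos(2)] layer[OF pos(3)] psi_order_4[OF p ij]
    by (simp add: move_X_def tau_def)
qed

lemma in_layer_move_pos:
  assumes "valid_move k n m" "p \<in> positions k n"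
  shows "in_layer n m (move_pos k n m p) \<longleftrightarrow> in_layer n m p"
proof -
  obtain i j c where m: "m = (i, j, c)" by (cases m)
  have "i < n" "j < n" "i \<noteq> j" "length p = n"
    using assms m by (auto simp: valid_move_def positions_def)
  then show ?thesis
    using m in_layer_psi move_pos_in_layer move_pos_not_in_layer by metis
qed

lemma move_pos_order_4:
  assumes "valid_move k n m" "p \<in> positions k n"
  shows "move_pos k n m (move_pos k n m (move_pos k n m (move_pos k n m p))) = p"
  using move_X_order_4[OF assms(1), of "(p, 0)"] assms(2) fst_move_X by (metis fst_conv prod.collapse)

lemma fst_move_X_positions:
  assumes "valid_move k n m" "fst x \<in> positions k n"
  shows "fst (move_X k n m x) \<in> positions k n"
  using assms move_pos_positions fst_move_X by (metis prod.collapse)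

lemma comb_pos_Nil [simp]: "comb_pos k n [] p = p"
  by (simp add: comb_pos_def)

lemma comb_X_Nil [simp]: "comb_X k n [] x = x"
  by (simp add: comb_X_def)

lemma comb_pos_Cons: "comb_pos k n (m # g) p = comb_pos k n g (move_pos k n m p)"
  by (simp add: comb_pos_def)

lemma comb_X_Cons: "comb_X k n (m # g) x = comb_X k n g (move_X k n m x)"
  by (simp add: comb_X_def)

lemma comb_pos_append: "comb_pos k n (g @ h) p = comb_pos k n h (comb_pos k n g p)"
  by (simp add: comb_pos_def)

lemma comb_X_append: "comb_X k n (g @ h) x = comb_X k n h (comb_X k n g x)"
  by (simp add: comb_X_def)

lemma valid_comb_Cons [simp]: "valid_comb k n (m # g) \<longleftrightarrow> valid_move k n m \<and> valid_comb k n g"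
  by (simp add: valid_comb_def)

lemma valid_comb_append [simp]: "valid_comb k n (g @ h) \<longleftrightarrow> valid_comb k n g \<and> valid_comb k n h"
  by (auto simp: valid_comb_def)

lemma valid_comb_Nil [simp]: "valid_comb k n []"
  by (simp add: valid_comb_def)

lemma fst_comb_X: "fst (comb_X k n g (p, l)) = comb_pos k n g p"
proof (induction g arbitrary: p l)
  case (Cons m g)
  then show ?case
    using fst_move_X[of k n m p l] by (simp add: comb_X_Cons comb_pos_Cons) (metis prod.collapse)
qed simp

lemma comb_pos_positions:
  assumes "valid_comb k n g" "p \<in> positions k n"
  shows "comb_pos k n g p \<in> positions k n"
  using assms by (induction g arbitrary: p) (auto simp: comb_pos_Cons move_pos_positions)

lemma fst_comb_X_positions:
  assumes "valid_comb k n g" "fst x \<in> positions k n"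
  shows "fst (comb_X k n g x) \<in> positions k n"
  using assms comb_pos_positions fst_comb_X by (metis prod.collapse)

definition comb_inv :: "move list \<Rightarrow> move list" where
  "comb_inv g = concat (map (\<lambda>m. [m, m, m]) (rev g))"

lemma comb_inv_Nil [simp]: "comb_inv [] = []"
  by (simp add: comb_inv_def)

lemma comb_inv_Cons: "comb_inv (m # g) = comb_inv g @ [m, m, m]"
  by (simp add: comb_inv_def)

lemma valid_comb_inv: "valid_comb k n g \<Longrightarrow> valid_comb k n (comb_inv g)"
  by (auto simp: comb_inv_def valid_comb_def)

lemma comb_X_comb_inv_left:
  assumes "valid_comb k n g" "fst x \<in> positions k n"
  shows "comb_X k n (comb_inv g) (comb_X k n g x) = x"
  using assms
proof (induction g arbitrary: x)
  case (Cons m g)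
  then show ?case
    using move_X_order_4[of k n m x] fst_move_X_positions[of k n m x]
    by (simp add: comb_inv_Cons comb_X_append comb_X_Cons)
qed simp

lemma comb_X_comb_inv_right:
  assumes "valid_comb k n g" "fst x \<in> positions k n"
  shows "comb_X k n g (comb_X k n (comb_inv g) x) = x"
  using assms
proof (induction g arbitrary: x)
  case (Cons m g)
  then show ?case
    using move_X_order_4[of k n m "comb_X k n (comb_inv g) x"]
      fst_comb_X_positions[OF valid_comb_inv, of k n g x]
    by (simp add: comb_inv_Cons comb_X_append comb_X_Cons)
qed simp

lemma comb_pos_comb_inv_left:
  assumes "valid_comb k n g" "p \<in> positions k n"
  shows "comb_pos k n (comb_inv g) (comb_pos k n g p) = p"
  using comb_X_comb_inv_left[OF assms(1), of "(p, 0)"] assms(2) fst_comb_X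
  by (metis fst_conv prod.collapse)

lemma comb_pos_comb_inv_right:
  assumes "valid_comb k n g" "p \<in> positions k n"
  shows "comb_pos k n g (comb_pos k n (comb_inv g) p) = p"
  using comb_X_comb_inv_right[OF assms(1), of "(p, 0)"] assms(2) fst_comb_X
  by (metis fst_conv prod.collapse)

lemma commutator_moved_point:
  assumes f: "\<And>x. x \<in> \<Omega> \<Longrightarrow> f' x \<in> \<Omega> \<and> f (f' x) = x \<and> f' (f x) = x"
    and g: "\<And>x. x \<in> \<Omega> \<Longrightarrow> g' x \<in> \<Omega> \<and> g (g' x) = x \<and> g' (g x) = x"
    and x: "x \<in> \<Omega>" and moved: "f (g (f' (g' x))) \<noteq> x"
  shows "\<exists>y\<in>\<Omega>. f y \<noteq> y \<and> g y \<noteq> y \<and> (x = y \<or> x = f y \<or> x = g y)"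
proof (cases "g' x = x")
  case True
  then have "g x = x"
    using g x by metis
  then show ?thesis
    using f x moved True by (intro bexI[of _ "f' x"]) metis+
next
  case False
  have y: "g' x \<in> \<Omega>" "g (g' x) = x"
    using g x by auto
  show ?thesis
  proof (cases "f' (g' x) = g' x")
    case True
    then show ?thesis
      using x moved False g y by (intro bexI[of _ x]) metis+
  next
    case False
    then show ?thesis
      using f y \<open>g' x \<noteq> x\<close> by (intro bexI[of _ "g' x"]) metis+
  qed
qed

text \<open>Combinations act from left to right, so \<open>comb_commutator g h\<close> acts as
  \<open>h \<circ> g \<circ> h\<inverse> \<circ> g\<inverse>\<close>.\<close>

definition comb_commutator :: "move list \<Rightarrow> move list \<Rightarrow> move list" where
  "comb_commutator g h = comb_inv g @ comb_inv h @ g @ h"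

lemma valid_comb_commutator:
  "valid_comb k n g \<Longrightarrow> valid_comb k n h \<Longrightarrow> valid_comb k n (comb_commutator g h)"
  by (simp add: comb_commutator_def valid_comb_inv)

lemma comb_commutator_moved_point:
  assumes "valid_comb k n g" "valid_comb k n h" "fst x \<in> positions k n"
    and "comb_X k n (comb_commutator g h) x \<noteq> x"
  obtains y where "fst y \<in> positions k n" "comb_X k n h y \<noteq> y" "comb_X k n g y \<noteq> y"
    "x = y \<or> x = comb_X k n h y \<or> x = comb_X k n g y"
proof -
  have inverse: "fst (comb_X k n (comb_inv f) x) \<in> positions k n \<and>
      comb_X k n f (comb_X k n (comb_inv f) x) = x \<and> comb_X k n (comb_inv f) (comb_X k n f x) = x"
    if "valid_comb k n f" "fst x \<in> positions k n" for f x
    using that comb_X_comb_inv_left comb_X_comb_inv_right fst_comb_X_positions valid_comb_inv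
    by blast
  have "\<exists>y\<in>{x. fst x \<in> positions k n}. comb_X k n h y \<noteq> y \<and> comb_X k n g y \<noteq> y \<and>
      (x = y \<or> x = comb_X k n h y \<or> x = comb_X k n g y)"
    using assms inverse
    by (intro commutator_moved_point[where f' = "comb_X k n (comb_inv h)" and g' = "comb_X k n (comb_inv g)"])
      (simp_all add: comb_commutator_def comb_X_append)
  then show thesis
    using that by blast
qed

section \<open>A 3-cycle through a moved position\<close>

locale pivot =
  fixes k n :: nat and r :: "nat list" and i j a :: nat and c :: "nat \<Rightarrow> nat"
  assumes r_pos: "r \<in> positions k n"
    and valid_ij: "valid_move k n (i, j, c)"
    and r_in_layer: "in_layer n (i, j, c) r"
    and r_moved: "psi k i j r \<noteq> r"
    and a: "a < n" "a \<noteq> i" "a \<noteq> j"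
    and a_admissible: "\<And>b. b \<in> {i, j} \<Longrightarrow> \<not> (r ! a = r ! b \<and> r ! a = k - 1 - r ! b)"
begin

text \<open>\<open>psi k a b\<close> writes \<open>k - 1 - q ! b\<close> into coordinate \<open>a\<close> and \<open>psi k b a\<close> writes
  \<open>q ! b\<close>; the orientation is chosen so that the new value differs from \<open>r ! a\<close>.\<close>

definition pivot_move :: "nat \<Rightarrow> move" where
  "pivot_move b = (if r ! a \<noteq> k - 1 - r ! b then (a, b, (!) r) else (b, a, (!) r))"

lemma ij_bounds: "i < n" "j < n" "i \<noteq> j"
  using valid_ij by (auto simp: valid_move_def)

lemma valid_pivot_move: "b \<in> {i, j} \<Longrightarrow> valid_move k n (pivot_move b)"
  using a ij_bounds r_pos by (auto simp: pivot_move_def valid_move_def positions_def)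

lemma in_layer_pivot_move:
  "in_layer n (pivot_move b) q \<longleftrightarrow> (\<forall>t<n. t \<noteq> a \<and> t \<noteq> b \<longrightarrow> q ! t = r ! t)"
  by (auto simp: pivot_move_def in_layer_def)

lemma in_layer_ij: "in_layer n (i, j, c) q \<longleftrightarrow> (\<forall>t<n. t \<noteq> i \<and> t \<noteq> j \<longrightarrow> q ! t = r ! t)"
  using r_in_layer by (auto simp: in_layer_def)

lemma pivot_move_changes_a:
  assumes "b \<in> {i, j}" "q \<in> positions k n" "in_layer n (pivot_move b) q" "q ! b = r ! b"
  shows "move_pos k n (pivot_move b) q ! a \<noteq> r ! a"
  using assms a ij_bounds a_admissible[OF assms(1)]
  by (auto simp: pivot_move_def move_pos_def nth_psi positions_def)

definition pivot_commutator :: "move list" where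
  "pivot_commutator = comb_commutator [pivot_move j] [pivot_move i]"

lemma valid_pivot_commutator: "valid_comb k n pivot_commutator"
  using valid_pivot_move by (simp add: pivot_commutator_def valid_comb_commutator)

lemma pivot_commutator_moved_in_layer:
  assumes x: "fst x \<in> positions k n" and moved: "comb_X k n pivot_commutator x \<noteq> x"
    and layer: "in_layer n (i, j, c) (fst x)"
  shows "fst x = r"
proof -
  obtain y where y: "fst y \<in> positions k n" "move_X k n (pivot_move i) y \<noteq> y"
    "move_X k n (pivot_move j) y \<noteq> y"
    "x = y \<or> x = move_X k n (pivot_move i) y \<or> x = move_X k n (pivot_move j) y"
    using comb_commutator_moved_point[of k n "[pivot_move j]" "[pivot_move i]" x] valid_pivot_move
      x moved by (auto simp: pivot_commutator_def comb_X_Cons)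
  obtain p l where yp: "y = (p, l)" by (cases y)
  have "in_layer n (pivot_move i) p" "in_layer n (pivot_move j) p"
    using y(2,3) yp move_X_not_in_layer by (metis fst_conv)+
  then have agree: "p ! t = r ! t" if "t < n" "t \<noteq> a" for t
    using that ij_bounds by (cases "t = i") (auto simp: in_layer_pivot_move)
  have x_a: "fst x ! a = r ! a"
    using layer a by (simp add: in_layer_ij)
  have p_pos: "p \<in> positions k n"
    using y(1) yp by simp
  have "fst x \<noteq> move_pos k n (pivot_move b) p" if "b \<in> {i, j}" for b
  proof -
    have "in_layer n (pivot_move b) p"
      using that \<open>in_layer n (pivot_move i) p\<close> \<open>in_layer n (pivot_move j) p\<close> by blast
    then show ?thesis
      using pivot_move_changes_a[OF that p_pos] agree that ij_bounds a x_a by auto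
  qed
  then have "fst x = p"
    using y(4) yp fst_move_X by (metis fst_conv insertI1 insertI2 singletonI)
  moreover have "p = r"
  proof (rule nth_equalityI)
    show "length p = length r"
      using p_pos r_pos by (simp add: positions_def)
    show "p ! t = r ! t" if "t < length p" for t
      using that agree x_a \<open>fst x = p\<close> p_pos by (cases "t = a") (auto simp: positions_def)
  qed
  ultimately show ?thesis by simp
qed

lemma pivot_commutator_fixes_in_layer:
  assumes "q \<in> positions k n" "in_layer n (i, j, c) q" "q \<noteq> r"
  shows "comb_pos k n pivot_commutator q = q"
  using pivot_commutator_moved_in_layer[of "(q, 0)"] assms fst_comb_X by (metis fst_conv)

lemma pivot_commutator_r: "comb_pos k n pivot_commutator r = move_pos k n (pivot_move i) r"
proof -
  let ?\<sigma> = "pivot_move i" and ?\<tau> = "pivot_move j"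
  define q where "q = comb_pos k n (comb_inv [?\<tau>]) r"
  have q_pos: "q \<in> positions k n"
    unfolding q_def using comb_pos_positions valid_comb_inv valid_pivot_move r_pos by simp
  have \<tau>q: "move_pos k n ?\<tau> q = r"
    using comb_pos_comb_inv_right[of k n "[?\<tau>]" r] valid_pivot_move r_pos
    by (simp add: q_def comb_pos_Cons)
  have q_layer: "in_layer n ?\<tau> q"
  proof (rule ccontr)
    assume out: "\<not> in_layer n ?\<tau> q"
    then have "q = r"
      using \<tau>q move_pos_not_in_layer by metis
    then show False
      using out by (simp add: in_layer_pivot_move)
  qed
  have "q ! j \<noteq> r ! j"
    using pivot_move_changes_a[of j q] q_pos q_layer \<tau>q by auto
  then have "\<not> in_layer n ?\<sigma> q"
    using ij_bounds a by (auto simp: in_layer_pivot_move)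
  then have "comb_pos k n (comb_inv [?\<sigma>]) q = q"
    by (simp add: comb_inv_def comb_pos_Cons move_pos_not_in_layer)
  then show ?thesis
    using \<tau>q by (simp add: pivot_commutator_def comb_commutator_def comb_pos_append q_def comb_pos_Cons)
qed

lemma pivot_commutator_moves_r: "comb_pos k n pivot_commutator r \<noteq> r"
  using pivot_move_changes_a[of i r] r_pos pivot_commutator_r by (auto simp: in_layer_pivot_move)

definition cycler :: "move list" where
  "cycler = comb_commutator [(i, j, c)] pivot_commutator"

lemma valid_cycler: "valid_comb k n cycler"
  using valid_ij valid_pivot_commutator by (simp add: cycler_def valid_comb_commutator)

lemma cycler_fixes:
  assumes "fst x \<in> positions k n"
    and "fst x \<notin> {r, comb_pos k n pivot_commutator r, psi k i j r}"
  shows "comb_X k n cycler x = x"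
proof (rule ccontr)
  assume "comb_X k n cycler x \<noteq> x"
  then obtain y where y: "fst y \<in> positions k n" "comb_X k n pivot_commutator y \<noteq> y"
    "move_X k n (i, j, c) y \<noteq> y" "x = y \<or> x = comb_X k n pivot_commutator y \<or> x = move_X k n (i, j, c) y"
    using comb_commutator_moved_point[of k n "[(i, j, c)]" pivot_commutator x] valid_ij
      valid_pivot_commutator assms(1) by (auto simp: cycler_def comb_X_Cons)
  obtain p l where yp: "y = (p, l)" by (cases y)
  have layer: "in_layer n (i, j, c) p"
    using y(3) yp move_X_not_in_layer by (metis fst_conv)
  then have "p = r"
    using pivot_commutator_moved_in_layer y(1,2) yp by (metis fst_conv)
  then have "fst x \<in> {r, comb_pos k n pivot_commutator r, psi k i j r}"
    using y(4) yp layer fst_comb_X fst_move_X move_pos_in_layer by (metis fst_conv insertCI)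
  then show False
    using assms(2) by blast
qed

lemma pivot_commutator_r_not_in_layer: "\<not> in_layer n (i, j, c) (comb_pos k n pivot_commutator r)"
proof -
  let ?z = "comb_pos k n pivot_commutator r"
  have z_pos: "?z \<in> positions k n"
    using comb_pos_positions[OF valid_pivot_commutator r_pos] .
  have "comb_pos k n (comb_inv pivot_commutator) ?z = r"
    using comb_pos_comb_inv_left[OF valid_pivot_commutator r_pos] .
  then have "comb_pos k n pivot_commutator ?z \<noteq> ?z"
    using comb_pos_comb_inv_left[OF valid_pivot_commutator z_pos] pivot_commutator_moves_r by metis
  then show ?thesis
    using pivot_commutator_fixes_in_layer z_pos pivot_commutator_moves_r by blast
qed

lemma psi_r_in_layer: "psi k i j r \<in> positions k n" "in_layer n (i, j, c) (psi k i j r)"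
  using move_pos_positions[OF valid_ij r_pos] in_layer_move_pos[OF valid_ij r_pos] r_in_layer
    move_pos_in_layer[OF r_in_layer] by simp_all

lemma distinct_cycle_points: "distinct [r, comb_pos k n pivot_commutator r, psi k i j r]"
  using pivot_commutator_moves_r r_moved pivot_commutator_r_not_in_layer psi_r_in_layer(2) by auto

lemma comb_pos_cycler:
  "comb_pos k n cycler q = comb_pos k n pivot_commutator (move_pos k n (i, j, c)
    (comb_pos k n (comb_inv pivot_commutator) (move_pos k n (i, j, c) (move_pos k n (i, j, c)
      (move_pos k n (i, j, c) q)))))"
  by (simp add: cycler_def comb_commutator_def comb_inv_def comb_pos_append comb_pos_Cons)

lemma cycler_r: "comb_pos k n cycler r = comb_pos k n pivot_commutator r"
proof -
  define u where "u = move_pos k n (i, j, c) (move_pos k n (i, j, c) (move_pos k n (i, j, c) r))"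
  have u: "u \<in> positions k n" "move_pos k n (i, j, c) u = r" "in_layer n (i, j, c) u"
    unfolding u_def using move_pos_positions in_layer_move_pos valid_ij r_pos r_in_layer
      move_pos_order_4[OF valid_ij r_pos] by auto
  then have "u \<noteq> r"
    using move_pos_in_layer[OF r_in_layer] r_moved by metis
  then have "comb_pos k n (comb_inv pivot_commutator) u = u"
    using pivot_commutator_fixes_in_layer[OF u(1,3)]
      comb_pos_comb_inv_left[OF valid_pivot_commutator u(1)] by metis
  then show ?thesis
    using comb_pos_cycler u(2) by (simp add: u_def)
qed

lemma cycler_pivot_commutator_r: "comb_pos k n cycler (comb_pos k n pivot_commutator r) = psi k i j r"
  using comb_pos_cycler move_pos_not_in_layer[OF pivot_commutator_r_not_in_layer]
    comb_pos_comb_inv_left[OF valid_pivot_commutator r_pos] move_pos_in_layer[OF r_in_layer]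
    pivot_commutator_fixes_in_layer[OF psi_r_in_layer r_moved] by simp

lemma cycler_psi_r: "comb_pos k n cycler (psi k i j r) = r"
proof -
  define w where "w = comb_pos k n (comb_inv pivot_commutator) r"
  have w: "w \<in> positions k n" "comb_pos k n pivot_commutator w = r"
    unfolding w_def using comb_pos_positions[OF valid_comb_inv[OF valid_pivot_commutator] r_pos]
      comb_pos_comb_inv_right[OF valid_pivot_commutator r_pos] by auto
  then have "\<not> in_layer n (i, j, c) w"
    using pivot_commutator_fixes_in_layer pivot_commutator_moves_r by metis
  then show ?thesis
    using comb_pos_cycler move_pos_not_in_layer w move_pos_order_4[OF valid_ij r_pos]
      move_pos_in_layer[OF r_in_layer] by (simp add: w_def)
qed

end

lemma move_in_three_cycle:
  assumes "r \<in> positions k n" "valid_move k n (i, j, c)" "in_layer n (i, j, c) r"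
    "psi k i j r \<noteq> r" "a < n" "a \<noteq> i" "a \<noteq> j"
    "\<And>b. b \<in> {i, j} \<Longrightarrow> \<not> (r ! a = r ! b \<and> r ! a = k - 1 - r ! b)"
  obtains K z where "valid_comb k n K" "distinct [r, z, psi k i j r]"
    "comb_pos k n K r = z" "comb_pos k n K z = psi k i j r" "comb_pos k n K (psi k i j r) = r"
    "\<And>x. fst x \<in> positions k n \<Longrightarrow> fst x \<notin> {r, z, psi k i j r} \<Longrightarrow> comb_X k n K x = x"
proof -
  interpret pivot k n r i j a c
    using assms by unfold_locales
  show thesis
    using that[OF valid_cycler distinct_cycle_points cycler_r cycler_pivot_commutator_r cycler_psi_r]
      cycler_fixes by blast
qed

section \<open>The frame class\<close>

definition frame_pos :: "nat \<Rightarrow> nat \<Rightarrow> nat \<Rightarrow> nat \<Rightarrow> nat list" where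
  "frame_pos k n t v = (replicate n ((k - 1) div 2))[t := v]"

lemma length_frame_pos [simp]: "length (frame_pos k n t v) = n"
  by (simp add: frame_pos_def)

lemma nth_frame_pos: "s < n \<Longrightarrow> frame_pos k n t v ! s = (if s = t then v else (k - 1) div 2)"
  by (simp add: frame_pos_def nth_list_update)

lemma frame_class_iff:
  assumes "odd k" "k \<ge> 2"
  shows "q \<in> frame_class k n \<longleftrightarrow> (\<exists>t<n. \<exists>v\<in>{0, k - 1}. q = frame_pos k n t v)"
proof
  assume "q \<in> frame_class k n"
  then have q: "q \<in> positions k n" "card (Bset k q) = 1"
    "\<forall>s<n. s \<notin> Bset k q \<longrightarrow> q ! s = (k - 1) div 2"
    using assms(1) by (simp_all add: frame_class_def)
  obtain t where t: "Bset k q = {t}"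
    using q(2) by (rule card_1_singletonE)
  have n: "length q = n"
    using q(1) by (simp add: positions_def)
  then have t_n: "t < n" "q ! t \<in> {0, k - 1}"
    using t by (auto simp: Bset_def)
  have "q = frame_pos k n t (q ! t)"
  proof (rule nth_equalityI)
    show "q ! s = frame_pos k n t (q ! t) ! s" if "s < length q" for s
      using that n q(3) t by (simp add: nth_frame_pos)
  qed (simp add: n)
  then have "t < n \<and> q ! t \<in> {0, k - 1} \<and> q = frame_pos k n t (q ! t)"
    using t_n by blast
  then show "\<exists>t<n. \<exists>v\<in>{0, k - 1}. q = frame_pos k n t v"
    by blast
next
  assume "\<exists>t<n. \<exists>v\<in>{0, k - 1}. q = frame_pos k n t v"
  then obtain t v where t: "t < n" "v \<in> {0, k - 1}" "q = frame_pos k n t v"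
    by blast
  have mid: "(k - 1) div 2 \<noteq> 0" "(k - 1) div 2 \<noteq> k - 1" "(k - 1) div 2 < k"
    using assms by (auto elim!: oddE)
  have "Bset k q = {t}"
    using t mid by (auto simp: Bset_def nth_frame_pos split: if_split_asm)
  moreover have "q \<in> positions k n"
    using t mid assms(2) by (auto simp: positions_def nth_frame_pos)
  ultimately show "q \<in> frame_class k n"
    using t(3) assms(1) by (simp add: frame_class_def nth_frame_pos)
qed

lemma psi_frame_pos:
  assumes "odd k" "u < n" "w < n" "u \<noteq> w" "t < n"
  shows "psi k u w (frame_pos k n t v) =
    (if t = u then frame_pos k n w v else if t = w then frame_pos k n u (k - 1 - v) else frame_pos k n t v)"
proof -
  have "k - 1 - (k - 1) div 2 = (k - 1) div 2"
    using assms(1) by (auto elim!: oddE)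
  then show ?thesis
    using assms by (intro nth_equalityI) (auto simp: nth_psi nth_frame_pos)
qed

lemma move_pos_frame_class:
  assumes "odd k" "k \<ge> 2" "q \<in> frame_class k n" "valid_move k n m"
  shows "move_pos k n m q \<in> frame_class k n"
proof (cases "in_layer n m q")
  case True
  obtain t v where t: "t < n" "v \<in> {0, k - 1}" "q = frame_pos k n t v"
    using assms frame_class_iff by blast
  obtain u w c where m: "m = (u, w, c)" by (cases m)
  have "u < n" "w < n" "u \<noteq> w" "k - 1 - v \<in> {0, k - 1}"
    using assms(4) m t(2) by (auto simp: valid_move_def)
  then show ?thesis
    using True m t psi_frame_pos[OF assms(1)] frame_class_iff[OF assms(1,2)] move_pos_in_layer
    by (metis (no_types, lifting))
qed (use assms move_pos_not_in_layer in metis)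

lemma comb_pos_frame_class:
  assumes "odd k" "k \<ge> 2" "q \<in> frame_class k n" "valid_comb k n g"
  shows "comb_pos k n g q \<in> frame_class k n"
  using assms(3,4) by (induction g arbitrary: q) (auto simp: comb_pos_Cons move_pos_frame_class[OF assms(1,2)])

lemma move_frame_pos:
  assumes "odd k" "t < n" "s < n" "t \<noteq> s"
  shows "valid_move k n (t, s, \<lambda>_. (k - 1) div 2)"
    and "move_pos k n (t, s, \<lambda>_. (k - 1) div 2) (frame_pos k n t v) = frame_pos k n s v"
    and "move_pos k n (t, s, \<lambda>_. (k - 1) div 2) (frame_pos k n s v) = frame_pos k n t (k - 1 - v)"
proof -
  have "(k - 1) div 2 < k"
    using assms(1) by (auto elim!: oddE)
  then show "valid_move k n (t, s, \<lambda>_. (k - 1) div 2)"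
    using assms by (simp add: valid_move_def)
  have "in_layer n (t, s, \<lambda>_. (k - 1) div 2) (frame_pos k n x v)" if "x \<in> {t, s}" for x
    using that by (auto simp: in_layer_def nth_frame_pos)
  then show "move_pos k n (t, s, \<lambda>_. (k - 1) div 2) (frame_pos k n t v) = frame_pos k n s v"
    and "move_pos k n (t, s, \<lambda>_. (k - 1) div 2) (frame_pos k n s v) = frame_pos k n t (k - 1 - v)"
    using assms psi_frame_pos move_pos_in_layer by simp_all
qed

lemma frame_class_reachable:
  assumes "odd k" "k \<ge> 2" "n \<ge> 2" "q \<in> frame_class k n" "q' \<in> frame_class k n"
  shows "\<exists>g. valid_comb k n g \<and> comb_pos k n g q = q'"
proof -
  obtain t v where t: "t < n" "v \<in> {0, k - 1}" "q = frame_pos k n t v"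
    using assms frame_class_iff by blast
  obtain t' v' where t': "t' < n" "v' \<in> {0, k - 1}" "q' = frame_pos k n t' v'"
    using assms frame_class_iff by blast
  let ?m = "\<lambda>t s. (t, s, \<lambda>_::nat. (k - 1) div 2)"
  have "v' = v \<or> v' = k - 1 - v"
    using t(2) t'(2) by auto
  then consider "t = t'" "v' = v" | "t \<noteq> t'" "v' = v" | "t \<noteq> t'" "v' = k - 1 - v" | "t = t'" "v' = k - 1 - v"
    by blast
  then show ?thesis
  proof cases
    case 1
    then show ?thesis
      using t t' by (intro exI[of _ "[]"]) simp
  next
    case 2
    then show ?thesis
      using t t' move_frame_pos[OF assms(1) t(1) t'(1) 2(1)]
      by (intro exI[of _ "[?m t t']"]) (simp add: comb_pos_Cons)
  next
    case 3
    then show ?thesis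
      using t t' move_frame_pos[OF assms(1) t'(1) t(1)] 3(1)
      by (intro exI[of _ "[?m t' t]"]) (simp add: comb_pos_Cons)
  next
    case 4
    define s :: nat where "s = (if t = 0 then 1 else 0)"
    have s: "s < n" "t \<noteq> s"
      using assms(3) by (auto simp: s_def)
    show ?thesis
      using 4 t t' move_frame_pos[OF assms(1) t(1) s]
      by (intro exI[of _ "[?m t s, ?m t s]"]) (simp add: comb_pos_Cons)
  qed
qed

lemma frame_class_if_midpoint_except:
  assumes "k \<ge> 2" "r \<in> positions k n" "Bset k r \<noteq> {}" "i < n" "i \<noteq> j"
    and mid: "\<And>t. t < n \<Longrightarrow> t \<noteq> j \<Longrightarrow> r ! t = k - 1 - r ! t"
  shows "r \<in> frame_class k n"
proof -
  have "r ! i = k - 1 - r ! i"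
    using mid assms(4,5) by blast
  then have odd: "odd k"
    using assms(1) by presburger
  have n: "length r = n"
    using assms(2) by (simp add: positions_def)
  have "Bset k r \<subseteq> {j}"
  proof
    fix t
    assume "t \<in> Bset k r"
    then have "t < n" "r ! t = 0 \<or> r ! t = k - 1"
      using n by (auto simp: Bset_def)
    then show "t \<in> {j}"
      using mid[of t] assms(1) by (cases "t = j") auto
  qed
  then have B: "Bset k r = {j}"
    using assms(3) by blast
  have "r ! t = (k - 1) div 2" if "t < n" "t \<notin> Bset k r" for t
    using mid[of t] that B by simp
  then show ?thesis
    using odd B assms(2) by (simp add: frame_class_def)
qed

lemma pivot_exists:
  assumes "k \<ge> 2" "n \<ge> 3" "external k n r" "r \<notin> frame_class k n" "i < n" "j < n" "i \<noteq> j"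
  obtains a where "a < n" "a \<noteq> i" "a \<noteq> j"
    "\<And>b. b \<in> {i, j} \<Longrightarrow> \<not> (r ! a = r ! b \<and> r ! a = k - 1 - r ! b)"
proof -
  have r: "r \<in> positions k n" "Bset k r \<noteq> {}"
    using assms(3) by (auto simp: external_def)
  show thesis
  proof (cases "\<exists>a<n. a \<noteq> i \<and> a \<noteq> j \<and> r ! a \<noteq> k - 1 - r ! a")
    case True
    then obtain a where "a < n" "a \<noteq> i" "a \<noteq> j" "r ! a \<noteq> k - 1 - r ! a"
      by blast
    then show thesis
      by (intro that[of a]) auto
  next
    case False
    then have others: "r ! t = k - 1 - r ! t" if "t < n" "t \<noteq> i" "t \<noteq> j" for t
      using that by blast
    have "r ! b \<noteq> k - 1 - r ! b" if "b \<in> {i, j}" for b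
    proof
      assume "r ! b = k - 1 - r ! b"
      then have "r \<in> frame_class k n"
        using that others assms(5-7)
          frame_class_if_midpoint_except[OF assms(1) r, of b "if b = i then j else i"]
        by (metis empty_iff insert_iff)
      then show False
        using assms(4) by blast
    qed
    moreover obtain a where "a < n" "a \<noteq> i" "a \<noteq> j"
      using assms(2,7) by (intro that[of "if 0 \<notin> {i, j} then 0 else if 1 \<notin> {i, j} then 1 else 2"]) auto
    ultimately show thesis
      using that by metis
  qed
qed

section \<open>Connectivity classes\<close>

lemma Bset_psi:
  assumes "length p = n" "i < n" "j < n" "i \<noteq> j" "t \<in> Bset k p"
  shows "tau i j t \<in> Bset k (psi k i j p)"
  using assms by (auto simp: Bset_def tau_def nth_psi)

lemma move_pos_external:
  assumes "valid_move k n m" "external k n p"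
  shows "external k n (move_pos k n m p)"
proof -
  obtain i j c where m: "m = (i, j, c)" by (cases m)
  have ij: "i < n" "j < n" "i \<noteq> j" and p: "p \<in> positions k n" "Bset k p \<noteq> {}"
    using assms m by (auto simp: valid_move_def external_def)
  then have "Bset k (psi k i j p) \<noteq> {}"
    using Bset_psi[of p n i j] by (auto simp: positions_def)
  then show ?thesis
    using m p move_pos_positions[OF assms(1) p(1)] move_pos_in_layer move_pos_not_in_layer
    by (metis external_def)
qed

lemma comb_pos_external:
  "valid_comb k n g \<Longrightarrow> external k n p \<Longrightarrow> external k n (comb_pos k n g p)"
  by (induction g arbitrary: p) (auto simp: comb_pos_Cons move_pos_external)

lemma conn_class_orbit:
  assumes "conn_class k n A" "r \<in> A"
  shows "A = {comb_pos k n g r | g. valid_comb k n g}"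
proof -
  obtain p where p: "external k n p" and A: "A = {comb_pos k n g p | g. valid_comb k n g}"
    using assms(1) by (auto simp: conn_class_def)
  obtain g0 where g0: "valid_comb k n g0" "r = comb_pos k n g0 p"
    using assms(2) A by blast
  have "comb_pos k n g r = comb_pos k n (g0 @ g) p" for g
    using g0 by (simp add: comb_pos_append)
  moreover have "comb_pos k n g p = comb_pos k n (comb_inv g0 @ g) r" for g
    using g0 p comb_pos_comb_inv_left by (simp add: comb_pos_append external_def)
  ultimately show ?thesis
    using A g0(1) valid_comb_inv[OF g0(1)] by fastforce
qed

lemma conn_class_comb_pos:
  assumes "conn_class k n A" "r \<in> A" "valid_comb k n g"
  shows "comb_pos k n g r \<in> A"
  using conn_class_orbit[OF assms(1,2)] assms(3) by blast

lemma conn_class_move_pos: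
  assumes "conn_class k n A" "r \<in> A" "valid_move k n m"
  shows "move_pos k n m r \<in> A"
  using conn_class_comb_pos[OF assms(1,2), of "[m]"] assms(3) by (simp add: comb_pos_Cons)

lemma conn_class_external: "conn_class k n A \<Longrightarrow> r \<in> A \<Longrightarrow> external k n r"
  by (auto simp: conn_class_def comb_pos_external)

lemma finite_positions: "finite (positions k n)"
proof -
  have "positions k n \<subseteq> {xs. set xs \<subseteq> {..<k} \<and> length xs = n}"
    by (auto simp: positions_def in_set_conv_nth)
  then show ?thesis
    using finite_lists_length_eq[of "{..<k}" n] finite_subset by blast
qed

lemma conn_class_positions: "conn_class k n A \<Longrightarrow> A \<subseteq> positions k n"
  using conn_class_external by (auto simp: external_def)

lemma conn_class_finite: "conn_class k n A \<Longrightarrow> finite A"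
  using conn_class_positions finite_positions by (rule finite_subset)

lemma conn_class_disjoint_frame_class:
  assumes "k \<ge> 2" "n \<ge> 2" "conn_class k n A" "odd k \<longrightarrow> A \<noteq> frame_class k n" "r \<in> A"
  shows "r \<notin> frame_class k n"
proof
  assume r: "r \<in> frame_class k n"
  then have odd: "odd k"
    by (auto simp: frame_class_def split: if_splits)
  have "A = {comb_pos k n g r | g. valid_comb k n g}"
    using conn_class_orbit[OF assms(3,5)] .
  also have "\<dots> = frame_class k n"
    using comb_pos_frame_class[OF odd assms(1) r] frame_class_reachable[OF odd assms(1,2) r]
    by blast
  finally show False
    using assms(4) odd by blast
qed

definition realizes :: "nat \<Rightarrow> nat \<Rightarrow> nat list set \<Rightarrow> move list \<Rightarrow> (nat list \<Rightarrow> nat list) \<Rightarrow> bool" where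
  "realizes k n A g \<rho> \<longleftrightarrow> valid_comb k n g \<and> (\<forall>p\<in>A. comb_pos k n g p = \<rho> p) \<and>
     (\<forall>q l. external k n q \<and> q \<notin> A \<and> l \<in> Bset k q \<longrightarrow> comb_X k n g (q, l) = (q, l))"

definition realizable :: "nat \<Rightarrow> nat \<Rightarrow> nat list set \<Rightarrow> (nat list \<Rightarrow> nat list) \<Rightarrow> bool" where
  "realizable k n A \<rho> \<longleftrightarrow> (\<exists>g. realizes k n A g \<rho>)"

interpretation realizable: cycle_closed A "realizable k n A" for k n A
proof
  show "realizable k n A id"
    unfolding realizable_def realizes_def by (intro exI[of _ "[]"]) simp
next
  fix f g
  assume "realizable k n A f" "realizable k n A g" "f ` A \<subseteq> A"
  then obtain gf gg where "realizes k n A gf f" "realizes k n A gg g"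
    by (auto simp: realizable_def)
  then have "realizes k n A (gf @ gg) (g \<circ> f)"
    using \<open>f ` A \<subseteq> A\<close> unfolding realizes_def by (auto simp: comb_pos_append comb_X_append)
  then show "realizable k n A (g \<circ> f)"
    by (auto simp: realizable_def)
qed

lemma realizable_three_cycle:
  assumes "A \<subseteq> positions k n" "r \<in> A" "z \<in> A" "w \<in> A" "valid_comb k n K" "distinct [r, z, w]"
    and "comb_pos k n K r = z" "comb_pos k n K z = w" "comb_pos k n K w = r"
    and fixed: "\<And>x. fst x \<in> positions k n \<Longrightarrow> fst x \<notin> {r, z, w} \<Longrightarrow> comb_X k n K x = x"
  shows "realizable k n A (cycle_of_list [r, z, w])"
proof -
  have "comb_pos k n K p = cycle_of_list [r, z, w] p" if "p \<in> A" for p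
  proof (cases "p \<in> {r, z, w}")
    case False
    then have "comb_pos k n K p = p"
      using fixed[of "(p, 0)"] that assms(1) fst_comb_X by (metis fst_conv subsetD)
    then show ?thesis
      using False assms(6) by (simp add: cycle_of_list_3_apply)
  qed (use assms(6-9) in \<open>auto simp: cycle_of_list_3_apply\<close>)
  moreover have "comb_X k n K (q, l) = (q, l)" if "external k n q" "q \<notin> A" for q l
    using that fixed[of "(q, l)"] assms(2-4) by (auto simp: external_def)
  ultimately show ?thesis
    unfolding realizable_def realizes_def using assms(5) by blast
qed

lemma move_pos_linked:
  assumes "k \<ge> 2" "n \<ge> 3" "conn_class k n A" "odd k \<longrightarrow> A \<noteq> frame_class k n"
    and "r \<in> A" "valid_move k n m"
  shows "realizable.linked A k n r (move_pos k n m r)"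
proof -
  obtain i j c where m: "m = (i, j, c)" by (cases m)
  show ?thesis
  proof (cases "in_layer n m r \<and> psi k i j r \<noteq> r")
    case False
    then have "move_pos k n m r = r"
      using m move_pos_not_in_layer move_pos_in_layer by metis
    then show ?thesis
      using assms(5) realizable.linked_refl by simp
  next
    case True
    let ?w = "psi k i j r"
    have ij: "i < n" "j < n" "i \<noteq> j"
      using assms(6) m by (auto simp: valid_move_def)
    have r: "external k n r" "r \<notin> frame_class k n"
      using conn_class_external conn_class_disjoint_frame_class assms by auto
    then have r_pos: "r \<in> positions k n"
      by (simp add: external_def)
    obtain a where a: "a < n" "a \<noteq> i" "a \<noteq> j"
      "\<And>b. b \<in> {i, j} \<Longrightarrow> \<not> (r ! a = r ! b \<and> r ! a = k - 1 - r ! b)"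
      using pivot_exists[OF assms(1,2) r ij] by blast
    obtain K z where K: "valid_comb k n K" "distinct [r, z, ?w]"
      "comb_pos k n K r = z" "comb_pos k n K z = ?w" "comb_pos k n K ?w = r"
      and fixed: "\<And>x. fst x \<in> positions k n \<Longrightarrow> fst x \<notin> {r, z, ?w} \<Longrightarrow> comb_X k n K x = x"
      using move_in_three_cycle[OF r_pos assms(6)[unfolded m]] True m a by metis
    have w: "move_pos k n m r = ?w"
      using True m move_pos_in_layer by metis
    have A: "z \<in> A" "?w \<in> A"
      using conn_class_comb_pos[OF assms(3,5) K(1)] conn_class_move_pos[OF assms(3,5,6)] K(3) w
      by simp_all
    have "realizable k n A (cycle_of_list [r, z, ?w])"
      using realizable_three_cycle[OF conn_class_positions[OF assms(3)]] K fixed A assms(5) by blast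
    then have "realizable k n A (cycle_of_list [r, ?w, z])"
      using realizable.R_cycle_reverse K(2) A assms(5) by blast
    then show ?thesis
      using K(2) A assms(5) w by (auto simp: realizable.linked_def)
  qed
qed

lemma conn_class_linked:
  assumes "k \<ge> 2" "n \<ge> 3" "conn_class k n A" "odd k \<longrightarrow> A \<noteq> frame_class k n"
    and "x \<in> A" "y \<in> A"
  shows "realizable.linked A k n x y"
proof -
  obtain g where g: "valid_comb k n g" "y = comb_pos k n g x"
    using conn_class_orbit[OF assms(3,5)] assms(6) by blast
  have "realizable.linked A k n p (comb_pos k n g p)" if "p \<in> A" for p
    using g(1) that
  proof (induction g arbitrary: p)
    case Nil
    then show ?case by (simp add: realizable.linked_refl)
  next
    case (Cons m g)
    have "move_pos k n m p \<in> A"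
      using conn_class_move_pos[OF assms(3) Cons.prems(2)] Cons.prems(1) by simp
    then show ?case
      using Cons.IH move_pos_linked[OF assms(1-4) Cons.prems(2)] Cons.prems(1)
        realizable.linked_trans by (simp add: comb_pos_Cons) blast
  qed
  then show ?thesis
    using g assms(5) by simp
qed

theorem mainTheorem4:
  fixes k n :: nat and A :: "nat list set" and \<pi> :: "nat list \<Rightarrow> nat list"
  assumes "k \<ge> 2" and "n \<ge> 3"
    and "conn_class k n A"
    and "odd k \<longrightarrow> A \<noteq> frame_class k n"
    and "\<pi> permutes A" and "evenperm \<pi>"
  shows "\<exists>g. valid_comb k n g \<and>
           (\<forall>p\<in>A. comb_pos k n g p = \<pi> p) \<and>
           (\<forall>q l. external k n q \<and> q \<notin> A \<and> l \<in> Bset k q \<longrightarrow>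
                  comb_X k n g (q, l) = (q, l))"
proof -
  have "realizable k n A \<pi>"
    using realizable.R_evenperm[OF conn_class_finite[OF assms(3)]
        conn_class_linked[OF assms(1-4)] assms(5,6)] .
  then show ?thesis
    by (auto simp: realizable_def realizes_def)
qed

end
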